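(* Let $a<b$, $M$ an even positive integer, $h=(b-a)/M$, $\tau>0$, $0<\varepsilon\le1$, and let $V^0,A_1^0$ be real constants. For $l=-M/2,\dots,M/2-1$ let $\mu_l=2l\pi/(b-a)$. Consider the leap-frog finite difference (LFFD) scheme with constant potentials $V\equiv V^0$, $A_1\equiv A_1^0$ described in the context, and its von Neumann amplification factors: for each $l$, the complex numbers $\xi$ satisfying $$\det\Big[(\xi^2-1)I_2+2i\tau\xi\Big(\frac{\sigma_3}{\varepsilon}+V^0I_2-A_1^0\sigma_1+\frac{\sin(\mu_lh)}{\varepsilon h}\sigma_1\Big)\Big]=0.$$ If $$0<\tau\le\frac{\varepsilon h}{|V^0|\varepsilon h+\sqrt{h^2+(|A_1^0|\varepsilon h+1)^2}},$$ then every such amplification factor satisfies $|\xi|\le1$ for every $l=-M/2,\dots,M/2-1$, i.e. the LFFD scheme is linearly (von Neumann) stable.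
   Context: Pauli matrices: $\sigma_1=\begin{pmatrix}0&1\\1&0\end{pmatrix}$, $\sigma_3=\begin{pmatrix}1&0\\0&-1\end{pmatrix}$; $I_2$ the $2\times2$ identity. Grid: $x_j=a+jh$, $t_n=n\tau$, periodic convention $\varPhi^n_M=\varPhi^n_0$, $\varPhi^n_{-1}=\varPhi^n_{M-1}$, $\varPhi^n_{M+1}=\varPhi^n_1$; $\delta_t\varPhi^n_j=(\varPhi^{n+1}_j-\varPhi^{n-1}_j)/(2\tau)$, $\delta_x\varPhi^n_j=(\varPhi^n_{j+1}-\varPhi^n_{j-1})/(2h)$. The LFFD scheme with constant potentials is, for $n\ge1$, $j=0,\dots,M-1$, $$i\delta_t\varPhi^n_j=\frac1\varepsilon(-i\sigma_1\delta_x+\sigma_3)\varPhi^n_j+(V^0I_2-A_1^0\sigma_1)\varPhi^n_j.$$ The amplification factors arise by substituting $\varPhi^n_j=\sum_{l}\xi_l^n\widehat{\varPhi}_l e^{2ijl\pi/M}$ (with $\widehat{\varPhi}_l\in\mathbb{C}^2$) into the scheme. *)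

theory Defs
  imports "HOL-Analysis.Analysis"
begin

definition sigma1 :: "complex^2^2" where
  "sigma1 = vector [vector [0, 1], vector [1, 0]]"

definition sigma3 :: "complex^2^2" where
  "sigma3 = vector [vector [1, 0], vector [0, -1]]"

definition I2 :: "complex^2^2" where
  "I2 = mat 1"

definition cscale :: "complex \<Rightarrow> complex^2^2 \<Rightarrow> complex^2^2" where
  "cscale c A = mat c ** A"

definition lffd_symbol ::
  "real \<Rightarrow> real \<Rightarrow> real \<Rightarrow> real \<Rightarrow> real \<Rightarrow> real \<Rightarrow> complex \<Rightarrow> complex^2^2" where
  "lffd_symbol \<tau> \<epsilon> h V0 A0 \<mu> \<xi> =
     cscale (\<xi>\<^sup>2 - 1) I2 +
     cscale (2 * \<i> * of_real \<tau> * \<xi>)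
       (cscale (of_real (1 / \<epsilon>)) sigma3 + cscale (of_real V0) I2
        - cscale (of_real A0) sigma1
        + cscale (of_real (sin (\<mu> * h) / (\<epsilon> * h))) sigma1)"

end

theory Submission
  imports Defs
begin

text \<open>
  Writing \<open>y = \<xi>\<^sup>2 - 1\<close>, \<open>c = 2 i \<tau> \<xi>\<close> and \<open>\<omega> = sqrt ((1/\<epsilon>)\<^sup>2 + (s - A\<^sub>0)\<^sup>2)\<close> with
  \<open>s = sin (\<mu> h) / (\<epsilon> h)\<close>, the symbol has determinant \<open>(y + c (V\<^sub>0 - \<omega>)) (y + c (V\<^sub>0 + \<omega>))\<close>,
  because \<open>\<sigma>\<^sub>1\<close> and \<open>\<sigma>\<^sub>3\<close> anticommute and square to the identity. So every amplification factor
  is a root of \<open>z\<^sup>2 + 2 i \<beta> z - 1\<close> with real \<open>\<beta> = \<tau> (V\<^sub>0 \<plusminus> \<omega>)\<close>; such roots lie on the unit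
  circle as soon as \<open>\<bar>\<beta>\<bar> \<le> 1\<close>. Since \<open>\<bar>s\<bar> \<le> 1/(\<epsilon> h)\<close>, the step size restriction is exactly
  what makes \<open>\<tau> (\<bar>V\<^sub>0\<bar> + \<omega>) \<le> 1\<close> for every mode.
\<close>

lemma det_pauli_combination:
  "det (cscale y I2 + cscale c (cscale p sigma3 + cscale v I2 - cscale a sigma1 + cscale q sigma1))
     = (y + c * v)\<^sup>2 - c\<^sup>2 * (p\<^sup>2 + (q - a)\<^sup>2)"
  unfolding det_2 cscale_def I2_def sigma1_def sigma3_def
  by (simp add: matrix_matrix_mult_def UNIV_2 vector_def mat_def algebra_simps power2_eq_square)

lemma lffd_symbol_det_eq_0_imp_root:
  fixes \<tau> \<epsilon> h V0 A0 \<mu> :: real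
  defines "\<omega> \<equiv> sqrt ((1 / \<epsilon>)\<^sup>2 + (sin (\<mu> * h) / (\<epsilon> * h) - A0)\<^sup>2)"
  assumes "det (lffd_symbol \<tau> \<epsilon> h V0 A0 \<mu> \<xi>) = 0"
  shows "\<xi>\<^sup>2 + 2 * \<i> * of_real (\<tau> * (V0 - \<omega>)) * \<xi> - 1 = 0
       \<or> \<xi>\<^sup>2 + 2 * \<i> * of_real (\<tau> * (V0 + \<omega>)) * \<xi> - 1 = 0"
proof -
  let ?c = "2 * \<i> * of_real \<tau> * \<xi>"
  have "\<omega>\<^sup>2 = (1 / \<epsilon>)\<^sup>2 + (sin (\<mu> * h) / (\<epsilon> * h) - A0)\<^sup>2"
    unfolding \<omega>_def by simp
  then have "(complex_of_real \<omega>)\<^sup>2 = of_real ((1 / \<epsilon>)\<^sup>2 + (sin (\<mu> * h) / (\<epsilon> * h) - A0)\<^sup>2)"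
    by (metis of_real_power)
  then have "det (lffd_symbol \<tau> \<epsilon> h V0 A0 \<mu> \<xi>) = (\<xi>\<^sup>2 - 1 + ?c * of_real V0)\<^sup>2 - ?c\<^sup>2 * (of_real \<omega>)\<^sup>2"
    unfolding lffd_symbol_def det_pauli_combination by simp
  also have "\<dots> = (\<xi>\<^sup>2 + 2 * \<i> * of_real (\<tau> * (V0 - \<omega>)) * \<xi> - 1)
                 * (\<xi>\<^sup>2 + 2 * \<i> * of_real (\<tau> * (V0 + \<omega>)) * \<xi> - 1)"
    by (simp add: algebra_simps power2_eq_square)
  finally show ?thesis
    using assms(2) by simp
qed

lemma quadratic_root_cmod_eq_1:
  fixes \<beta> :: real and z :: complex
  assumes "\<bar>\<beta>\<bar> \<le> 1" and "z\<^sup>2 + 2 * \<i> * of_real \<beta> * z - 1 = 0"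
  shows "cmod z = 1"
proof -
  obtain x y where z: "z = Complex x y" by (cases z)
  from assms(2) have re: "x\<^sup>2 - y\<^sup>2 - 2 * \<beta> * y - 1 = 0" and im: "x * (y + \<beta>) = 0"
    unfolding z by (simp_all add: complex_eq_iff power2_eq_square algebra_simps)
  have "x\<^sup>2 + y\<^sup>2 = 1"
  proof (cases "x = 0")
    case True
    with re have "(y + \<beta>)\<^sup>2 = \<beta>\<^sup>2 - 1"
      by (simp add: power2_eq_square algebra_simps)
    moreover have "\<beta>\<^sup>2 \<le> 1"
      using assms(1) by (simp add: abs_square_le_1)
    ultimately have "y = - \<beta>" "\<beta>\<^sup>2 = 1"
      using zero_le_power2 [of "y + \<beta>"] by (simp_all add: add_eq_0_iff)
    with True show ?thesis by simp
  next
    case False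
    with im have "y = - \<beta>" by simp
    with re show ?thesis by (simp add: power2_eq_square algebra_simps)
  qed
  then show ?thesis
    unfolding z cmod_def by simp
qed

lemma lffd_step_size_bound:
  fixes h \<epsilon> \<tau> V0 A0 s :: real
  assumes "0 < h" "0 < \<epsilon>" "0 < \<tau>" "\<bar>s\<bar> \<le> 1 / (\<epsilon> * h)"
    and "\<tau> \<le> \<epsilon> * h / (\<bar>V0\<bar> * \<epsilon> * h + sqrt (h\<^sup>2 + (\<bar>A0\<bar> * \<epsilon> * h + 1)\<^sup>2))"
  shows "\<tau> * (\<bar>V0\<bar> + sqrt ((1 / \<epsilon>)\<^sup>2 + (s - A0)\<^sup>2)) \<le> 1"
proof -
  define S where "S = sqrt (h\<^sup>2 + (\<bar>A0\<bar> * \<epsilon> * h + 1)\<^sup>2)"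
  define D where "D = \<bar>V0\<bar> * \<epsilon> * h + S"
  define R where "R = (1 / \<epsilon>)\<^sup>2 + (1 / (\<epsilon> * h) + \<bar>A0\<bar>)\<^sup>2"
  have eh: "0 < \<epsilon> * h" using assms(1,2) by simp
  have "\<bar>s - A0\<bar> \<le> 1 / (\<epsilon> * h) + \<bar>A0\<bar>" using assms(4) by linarith
  then have "(s - A0)\<^sup>2 \<le> (1 / (\<epsilon> * h) + \<bar>A0\<bar>)\<^sup>2"
    using eh by (simp add: power2_le_iff_abs_le)
  then have "sqrt ((1 / \<epsilon>)\<^sup>2 + (s - A0)\<^sup>2) \<le> sqrt R"
    unfolding R_def by simp
  also have "sqrt R = sqrt (R * (\<epsilon> * h)\<^sup>2) / (\<epsilon> * h)"
    using assms(1,2) by (simp add: real_sqrt_mult)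
  also have "R * (\<epsilon> * h)\<^sup>2 = h\<^sup>2 + (\<bar>A0\<bar> * \<epsilon> * h + 1)\<^sup>2"
    unfolding R_def using assms(1,2) by (simp add: field_simps power2_eq_square)
  finally have "\<bar>V0\<bar> + sqrt ((1 / \<epsilon>)\<^sup>2 + (s - A0)\<^sup>2) \<le> \<bar>V0\<bar> + S / (\<epsilon> * h)"
    unfolding S_def by simp
  also have "\<dots> = D / (\<epsilon> * h)"
    unfolding D_def using assms(1,2) by (simp add: add_divide_distrib)
  finally have "\<bar>V0\<bar> + sqrt ((1 / \<epsilon>)\<^sup>2 + (s - A0)\<^sup>2) \<le> D / (\<epsilon> * h)" .
  moreover have "0 < D"
  proof -
    have "0 < S" unfolding S_def using assms(1) by (simp add: add_pos_nonneg)
    moreover have "0 \<le> \<bar>V0\<bar> * \<epsilon> * h" using eh by (simp add: mult.assoc)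
    ultimately show ?thesis unfolding D_def by linarith
  qed
  moreover have "\<tau> \<le> \<epsilon> * h / D"
    using assms(5) unfolding D_def S_def .
  ultimately have "\<tau> * (\<bar>V0\<bar> + sqrt ((1 / \<epsilon>)\<^sup>2 + (s - A0)\<^sup>2)) \<le> (\<epsilon> * h / D) * (D / (\<epsilon> * h))"
    using assms(3) by (intro mult_mono) auto
  also have "\<dots> = 1" using assms(1,2) \<open>0 < D\<close> by simp
  finally show ?thesis .
qed

theorem lemma4:
  fixes a b \<tau> \<epsilon> V0 A0 :: real and M :: nat
  assumes "a < b" and "even M" and "M > 0"
    and "0 < \<epsilon>" and "\<epsilon> \<le> 1"
    and "0 < \<tau>"
    and "\<tau> \<le> (\<epsilon> * ((b - a) / real M)) /
              (\<bar>V0\<bar> * \<epsilon> * ((b - a) / real M)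
               + sqrt (((b - a) / real M)\<^sup>2
                       + (\<bar>A0\<bar> * \<epsilon> * ((b - a) / real M) + 1)\<^sup>2))"
  shows "\<forall>(l::int) (\<xi>::complex).
           - (int M div 2) \<le> l \<and> l \<le> int M div 2 - 1 \<and>
           det (lffd_symbol \<tau> \<epsilon> ((b - a) / real M) V0 A0
                  (2 * real_of_int l * pi / (b - a)) \<xi>) = 0
           \<longrightarrow> cmod \<xi> \<le> 1"
proof (intro allI impI)
  fix l :: int and \<xi> :: complex
  define h where "h = (b - a) / real M"
  define \<mu> where "\<mu> = 2 * real_of_int l * pi / (b - a)"
  define \<omega> where "\<omega> = sqrt ((1 / \<epsilon>)\<^sup>2 + (sin (\<mu> * h) / (\<epsilon> * h) - A0)\<^sup>2)"
  assume "- (int M div 2) \<le> l \<and> l \<le> int M div 2 - 1 \<and>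
    det (lffd_symbol \<tau> \<epsilon> ((b - a) / real M) V0 A0 (2 * real_of_int l * pi / (b - a)) \<xi>) = 0"
  then have root: "\<xi>\<^sup>2 + 2 * \<i> * of_real (\<tau> * (V0 - \<omega>)) * \<xi> - 1 = 0
                 \<or> \<xi>\<^sup>2 + 2 * \<i> * of_real (\<tau> * (V0 + \<omega>)) * \<xi> - 1 = 0"
    unfolding \<omega>_def h_def \<mu>_def by (intro lffd_symbol_det_eq_0_imp_root) simp
  have "0 < h" unfolding h_def using assms(1,3) by simp
  have step_size: "\<tau> \<le> \<epsilon> * h / (\<bar>V0\<bar> * \<epsilon> * h + sqrt (h\<^sup>2 + (\<bar>A0\<bar> * \<epsilon> * h + 1)\<^sup>2))"
    using assms(7) unfolding h_def .
  have sin_bound: "\<bar>sin (\<mu> * h) / (\<epsilon> * h)\<bar> \<le> 1 / (\<epsilon> * h)"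
    using \<open>0 < h\<close> assms(4) by (simp add: abs_divide divide_right_mono)
  have mode_bound: "\<tau> * (\<bar>V0\<bar> + \<omega>) \<le> 1"
    unfolding \<omega>_def by (rule lffd_step_size_bound [OF \<open>0 < h\<close> assms(4,6) sin_bound step_size])
  have "0 \<le> \<omega>" unfolding \<omega>_def by simp
  then have "\<bar>V0 - \<omega>\<bar> \<le> \<bar>V0\<bar> + \<omega>" "\<bar>V0 + \<omega>\<bar> \<le> \<bar>V0\<bar> + \<omega>"
    by arith+
  then have "\<bar>\<tau> * (V0 - \<omega>)\<bar> \<le> 1" "\<bar>\<tau> * (V0 + \<omega>)\<bar> \<le> 1"
    using assms(6) mode_bound
    by (simp_all add: abs_mult) (smt (verit) mult_left_mono)+
  with root show "cmod \<xi> \<le> 1"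
    using quadratic_root_cmod_eq_1 by fastforce
qed

end
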